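(* Let $\mathcal{D}$ be a DCR graph and suppose $\mathbf{1}\triangleright P_0\xrightarrow{\tau}P_1\xrightarrow{\tau}\cdots\xrightarrow{\tau}P_n$ with $P_0=\textsc{dcrpsi}(\mathcal{D})$. Then the generation component (fourth component) of the frame $\mathcal{F}(P_n)$ is $s^n(0)$, i.e. equals $n$.
   Context: A DCR graph is a tuple $(E,M,\to\!\bullet,\bullet\!\to,\to\!\diamond,\to\!+,\to\!\%)$ where $E$ is a set of events (names from a nominal set), $M=(Ex',Re',In')$ is a triple of subsets of $E$ (the marking), and $\to\!\bullet,\bullet\!\to,\to\!\diamond,\to\!+,\to\!\%\subseteq E\times E$ are the condition, response, milestone, include and exclude relations. For a relation $\to$ write $e\!\to=\{f\mid e\to f\}$ and $\to\! e=\{f\mid f\to e\}$. dcrPsi instance: assertions are quadruples $(Ex,Re,In,G)$ with $Ex,Re,In\subseteq E$ and $G$ a natural number built from $0$ and successor $s(\cdot)$ (the generation); terms are a distinguished channel name $m$ and assertions; conditions are triples $(Co,Mi,e)$ with $Co,Mi\subseteq E$, $e\in E$; channel equality is $=$; unit $\mathbf{1}=(\emptyset,\emptyset,\emptyset,0)$; composition: $(Ex,Re,In,G)\otimes(Ex',Re',In',G')$ equals the first argument if $G>G'$, the second if $G<G'$, and $(Ex\cup Ex',Re\cup Re',In\cup In',G)$ if $G=G'$; entailment: $(Ex,Re,In,G)\vdash(Co,Mi,e)$ iff $e\in In$, $In\cap Co\subseteq Ex$ and $In\cap Mi\cap Re=\emptyset$. Psi-calculus: processes $\mathbf{0}$,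 $(\!|\Psi|\!)$, $\overline{M}\langle N\rangle.P$, $\underline{M}(\lambda\tilde x)N.P$, $\mathbf{case}\ \tilde\varphi:\tilde P$, $P\mid Q$, $!P$. Frames: $\mathcal{F}((\!|\Psi|\!))=\Psi$, $\mathcal{F}(P\mid Q)=\mathcal{F}(P)\otimes\mathcal{F}(Q)$, frame of $\mathbf{0}$, prefixed, case and replicated processes is $\mathbf{1}$. Transitions $\Psi\triangleright P\xrightarrow{\alpha}P'$ are generated by: (Out) if $\Psi\vdash M\leftrightarrow K$ then $\Psi\triangleright\overline{M}\langle N\rangle.P\xrightarrow{\overline{K}N}P$; (In) if $\Psi\vdash M\leftrightarrow K$ then $\Psi\triangleright\underline{M}(\lambda\tilde y)N.P\xrightarrow{\underline{K}N[\tilde y:=\tilde L]}P[\tilde y:=\tilde L]$ for any terms $\tilde L$; (Case) if $\Psi\triangleright P_i\xrightarrow{\alpha}P'$ and $\Psi\vdash\varphi_i$ then $\Psi\triangleright\mathbf{case}\ \tilde\varphi:\tilde P\xrightarrow{\alpha}P'$; (Par) if $\Psi\otimes\mathcal{F}(Q)\triangleright P\xrightarrow{\alpha}P'$ then $\Psi\triangleright P\mid Q\xrightarrow{\alpha}P'\mid Q$, and symmetrically; (Rep) if $\Psi\triangleright P\mid !P\xrightarrow{\alpha}P'$ then $\Psi\triangleright !P\xrightarrow{\alpha}P'$; (Com) if $\mathcal{F}(P)=\Psi_P$, $\mathcal{F}(Q)=\Psi_Q$, $\Psi_Q\otimes\Psi\triangleright P\xrightarrow{\overline{M}N}P'$,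 $\Psi_P\otimes\Psi\triangleright Q\xrightarrow{\underline{K}N}Q'$ and $\Psi_Q\otimes\Psi_P\otimes\Psi\vdash M\leftrightarrow K$, then $\Psi\triangleright P\mid Q\xrightarrow{\tau}P'\mid Q'$, and symmetrically. Assertion processes and $\mathbf{0}$ have no transitions. Set-expressions in terms are identified with their values after substitution. Translation: $\textsc{dcrpsi}(\mathcal{D})=P_s\mid\big|_{e\in E}P_e$ with $P_s=(\!|(Ex',Re',In',0)|\!)\mid\overline{m}\langle(Ex',Re',In',0)\rangle.\mathbf{0}$ and $P_e=!\big(\mathbf{case}\ \varphi_e:\underline{m}(\lambda X_E,X_R,X_I,X_G)(X_E,X_R,X_I,X_G).(\overline{m}\langle U_e\rangle.\mathbf{0}\mid(\!|U_e|\!))\big)$, where $U_e=(X_E\cup\{e\},(X_R\setminus\{e\})\cup e\!\bullet\!\!\to,(X_I\setminus e\!\to\!\%)\cup e\!\to\!+,s(X_G))$ and $\varphi_e=(\to\!\bullet e,\to\!\diamond e,e)$. *)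

theory Defs
  imports Main
begin

text \<open>Assertions (Ea, Ra, Ia, G); the generation G is a natural number (0 and Suc = s).\<close>
type_synonym 'e assn = "'e set \<times> 'e set \<times> 'e set \<times> nat"

type_synonym 'e cnd = "'e set \<times> 'e set \<times> 'e"

text \<open>Terms: the distinguished channel name m, and assertions.\<close>
datatype 'e trm = Chan | ATrm "'e assn"

definition unit_assn :: "'e assn" where
  "unit_assn = ({}, {}, {}, 0)"

fun gen :: "'e assn \<Rightarrow> nat" where
  "gen (Ea, Ra, Ia, G) = G"

fun comp_assn :: "'e assn \<Rightarrow> 'e assn \<Rightarrow> 'e assn" where
  "comp_assn (Ea, Ra, Ia, G) (Eb, Rb, Ib, G2) =
     (if G > G2 then (Ea, Ra, Ia, G)
      else if G < G2 then (Eb, Rb, Ib, G2)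
      else (Ea \<union> Eb, Ra \<union> Rb, Ia \<union> Ib, G))"

fun entails :: "'e assn \<Rightarrow> 'e cnd \<Rightarrow> bool" where
  "entails (Ea, Ra, Ia, G) (Co, Mi, e) \<longleftrightarrow>
     e \<in> Ia \<and> Ia \<inter> Co \<subseteq> Ea \<and> Ia \<inter> Mi \<inter> Ra = {}"

definition chan_eq :: "'e assn \<Rightarrow> 'e trm \<Rightarrow> 'e trm \<Rightarrow> bool" where
  "chan_eq \<Psi> M K \<longleftrightarrow> M = K"

text \<open>Input prefixes bind the four variables X_E, X_R, X_I, X_G; the binding is
 represented in higher-order abstract syntax: the pattern and the continuation
 are functions of the substituted values (so set expressions are identified
 with their values after substitution).\<close>
datatype 'e proc =
    PNil
  | PAss "'e assn"
  | POut "'e trm" "'e trm" "'e proc"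
  | PInp "'e trm" "'e assn \<Rightarrow> 'e trm" "'e assn \<Rightarrow> 'e proc"
  | PCase "('e cnd \<times> 'e proc) list"
  | PPar "'e proc" "'e proc"
  | PRep "'e proc"

fun frame :: "'e proc \<Rightarrow> 'e assn" where
  "frame (PAss \<Psi>) = \<Psi>"
| "frame (PPar P Q) = comp_assn (frame P) (frame Q)"
| "frame _ = unit_assn"

datatype 'e label = LOut "'e trm" "'e trm" | LIn "'e trm" "'e trm" | LTau

inductive trans :: "'e assn \<Rightarrow> 'e proc \<Rightarrow> 'e label \<Rightarrow> 'e proc \<Rightarrow> bool" where
  Out: "chan_eq \<Psi> M K \<Longrightarrow> trans \<Psi> (POut M N P) (LOut K N) P"
| Ia: "chan_eq \<Psi> M K \<Longrightarrow> trans \<Psi> (PInp M N P) (LIn K (N L)) (P L)"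
| Case: "i < length cs \<Longrightarrow> trans \<Psi> (snd (cs ! i)) \<alpha> P' \<Longrightarrow> entails \<Psi> (fst (cs ! i))
         \<Longrightarrow> trans \<Psi> (PCase cs) \<alpha> P'"
| ParL: "trans (comp_assn \<Psi> (frame Q)) P \<alpha> P' \<Longrightarrow> trans \<Psi> (PPar P Q) \<alpha> (PPar P' Q)"
| ParR: "trans (comp_assn \<Psi> (frame P)) Q \<alpha> Q' \<Longrightarrow> trans \<Psi> (PPar P Q) \<alpha> (PPar P Q')"
| Rep: "trans \<Psi> (PPar P (PRep P)) \<alpha> P' \<Longrightarrow> trans \<Psi> (PRep P) \<alpha> P'"
| ComL: "trans (comp_assn (frame Q) \<Psi>) P (LOut M N) P' \<Longrightarrow>
         trans (comp_assn (frame P) \<Psi>) Q (LIn K N) Q' \<Longrightarrow>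
         chan_eq (comp_assn (comp_assn (frame Q) (frame P)) \<Psi>) M K \<Longrightarrow>
         trans \<Psi> (PPar P Q) LTau (PPar P' Q')"
| ComR: "trans (comp_assn (frame Q) \<Psi>) P (LIn K N) P' \<Longrightarrow>
         trans (comp_assn (frame P) \<Psi>) Q (LOut M N) Q' \<Longrightarrow>
         chan_eq (comp_assn (comp_assn (frame Q) (frame P)) \<Psi>) M K \<Longrightarrow>
         trans \<Psi> (PPar P Q) LTau (PPar P' Q')"

record 'e dcr =
  events :: "'e set"
  mEx :: "'e set"
  mRe :: "'e set"
  mIn :: "'e set"
  rcond :: "('e \<times> 'e) set"
  rresp :: "('e \<times> 'e) set"
  rmile :: "('e \<times> 'e) set"
  rincl :: "('e \<times> 'e) set"
  rexcl :: "('e \<times> 'e) set"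

definition wf_dcr :: "'e dcr \<Rightarrow> bool" where
  "wf_dcr D \<longleftrightarrow> mEx D \<subseteq> events D \<and> mRe D \<subseteq> events D \<and> mIn D \<subseteq> events D
     \<and> rcond D \<subseteq> events D \<times> events D \<and> rresp D \<subseteq> events D \<times> events D
     \<and> rmile D \<subseteq> events D \<times> events D \<and> rincl D \<subseteq> events D \<times> events D
     \<and> rexcl D \<subseteq> events D \<times> events D"

fun U_e :: "'e dcr \<Rightarrow> 'e \<Rightarrow> 'e assn \<Rightarrow> 'e assn" where
  "U_e D e (XE, XR, XI, XG) =
     (XE \<union> {e},
      (XR - {e}) \<union> {f. (e, f) \<in> rresp D},
      (XI - {f. (e, f) \<in> rexcl D}) \<union> {f. (e, f) \<in> rincl D},
      Suc XG)"

definition phi_e :: "'e dcr \<Rightarrow> 'e \<Rightarrow> 'e cnd" where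
  "phi_e D e = ({f. (f, e) \<in> rcond D}, {f. (f, e) \<in> rmile D}, e)"

definition P_e :: "'e dcr \<Rightarrow> 'e \<Rightarrow> 'e proc" where
  "P_e D e = PRep (PCase [(phi_e D e,
      PInp Chan (\<lambda>X. ATrm X)
        (\<lambda>X. PPar (POut Chan (ATrm (U_e D e X)) PNil) (PAss (U_e D e X))))])"

definition P_s :: "'e dcr \<Rightarrow> 'e proc" where
  "P_s D = PPar (PAss (mEx D, mRe D, mIn D, 0))
                (POut Chan (ATrm (mEx D, mRe D, mIn D, 0)) PNil)"

fun big_par :: "'e proc list \<Rightarrow> 'e proc" where
  "big_par [] = PNil"
| "big_par [P] = P"
| "big_par (P # Ps) = PPar P (big_par Ps)"

text \<open>The translation, relative to an enumeration es of the events.\<close>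
definition dcrpsi :: "'e dcr \<Rightarrow> 'e list \<Rightarrow> 'e proc" where
  "dcrpsi D es = PPar (P_s D) (big_par (map (P_e D) es))"

end

theory Submission
  imports Defs "HOL-Library.Multiset"
begin

text \<open>Every process reachable from the translation is built from assertions, finished outputs
  and replicated guarded inputs that answer a message of generation g with an output and an
  assertion of generation g + 1. A \<open>\<tau>\<close> step is a communication on m: it consumes one pending
  output of some generation g and produces one of generation g + 1 together with an assertion
  of generation g + 1. Since the translation starts with a single pending output and frame
  generation 0, after n steps there is a single pending output of generation n and, as
  composition of assertions keeps the larger generation, the frame has generation n.\<close>

definition frame_gen :: "'e proc \<Rightarrow> nat" where
  "frame_gen P = gen (frame P)"

lemma gen_comp_assn: "gen (comp_assn \<Psi> \<Psi>') = max (gen \<Psi>) (gen \<Psi>')"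
  by (cases \<Psi>; cases \<Psi>') auto

lemma frame_gen_simps [simp]:
  "frame_gen PNil = 0"
  "frame_gen (PAss \<Psi>) = gen \<Psi>"
  "frame_gen (POut M N P) = 0"
  "frame_gen (PInp M T F) = 0"
  "frame_gen (PCase cs) = 0"
  "frame_gen (PRep P) = 0"
  "frame_gen (PPar P Q) = max (frame_gen P) (frame_gen Q)"
  by (simp_all add: frame_gen_def gen_comp_assn unit_assn_def)

fun pending_gens :: "'e proc \<Rightarrow> nat multiset" where
  "pending_gens (POut M (ATrm \<Psi>) P) = {#gen \<Psi>#}"
| "pending_gens (PPar P Q) = pending_gens P + pending_gens Q"
| "pending_gens _ = {#}"

text \<open>The body of \<open>P_e\<close>, abstracting from the update \<open>U_e\<close> everything except that it
  increments the generation.\<close>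
definition gen_incrementing_case :: "('e cnd \<times> 'e proc) list \<Rightarrow> bool" where
  "gen_incrementing_case cs \<longleftrightarrow>
     (\<exists>\<phi> M U. cs = [(\<phi>, PInp M ATrm (\<lambda>X. PPar (POut Chan (ATrm (U X)) PNil) (PAss (U X))))]
        \<and> (\<forall>X. gen (U X) = Suc (gen X)))"

fun dcr_shaped :: "'e proc \<Rightarrow> bool" where
  "dcr_shaped PNil = True"
| "dcr_shaped (PAss \<Psi>) = True"
| "dcr_shaped (POut M N P) = ((\<exists>\<Psi>. N = ATrm \<Psi>) \<and> P = PNil)"
| "dcr_shaped (PInp M N F) = False"
| "dcr_shaped (PCase cs) = gen_incrementing_case cs"
| "dcr_shaped (PPar P Q) = (dcr_shaped P \<and> dcr_shaped Q)"
| "dcr_shaped (PRep P) = (dcr_shaped P \<and> (\<exists>cs. P = PCase cs))"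

lemma trans_PInpE:
  assumes "trans \<Psi> (PInp M N F) \<alpha> P'"
  obtains K L where "\<alpha> = LIn K (N L)" and "P' = F L"
  using assms by (cases rule: trans.cases) auto

lemma gen_incrementing_caseE:
  assumes "gen_incrementing_case cs"
  obtains \<phi> M U
  where "cs = [(\<phi>, PInp M ATrm (\<lambda>X. PPar (POut Chan (ATrm (U X)) PNil) (PAss (U X))))]"
    and "\<And>X. gen (U X) = Suc (gen X)"
  using assms unfolding gen_incrementing_case_def by blast

lemma dcr_shaped_trans_out:
  assumes "trans \<Psi> P \<alpha> P'" and "dcr_shaped P" and "\<alpha> = LOut M N"
  shows "\<exists>\<Phi>. N = ATrm \<Phi> \<and> gen \<Phi> \<in># pending_gens P
           \<and> pending_gens P' = pending_gens P - {#gen \<Phi>#}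
           \<and> frame_gen P' = frame_gen P \<and> dcr_shaped P'"
  using assms
proof (induction arbitrary: M N rule: trans.induct)
  case (Case i cs \<Psi> \<alpha> P')
  then show ?case by (auto elim!: gen_incrementing_caseE trans_PInpE)
qed fastforce+

lemma dcr_shaped_trans_in:
  assumes "trans \<Psi> P \<alpha> P'" and "dcr_shaped P" and "\<alpha> = LIn K N"
  shows "\<exists>\<Phi>. N = ATrm \<Phi> \<and> pending_gens P' = pending_gens P + {#Suc (gen \<Phi>)#}
           \<and> frame_gen P' = max (frame_gen P) (Suc (gen \<Phi>)) \<and> dcr_shaped P'"
  using assms
proof (induction arbitrary: K N rule: trans.induct)
  case (Case i cs \<Psi> \<alpha> P')
  from \<open>dcr_shaped (PCase cs)\<close> obtain \<phi> M U
    where cs: "cs = [(\<phi>, PInp M ATrm (\<lambda>X. PPar (POut Chan (ATrm (U X)) PNil) (PAss (U X))))]"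
      and U: "\<And>X. gen (U X) = Suc (gen X)"
    by (auto elim: gen_incrementing_caseE)
  with Case.hyps(1,2) obtain K' L
    where "\<alpha> = LIn K' (ATrm L)" and "P' = PPar (POut Chan (ATrm (U L)) PNil) (PAss (U L))"
    by (auto elim: trans_PInpE)
  with Case.prems(2) U show ?case
    by (intro exI[of _ L]) (simp del: split_paired_Ex add: exI[of _ "U L"])
qed (fastforce simp: max.assoc max.left_commute)+

lemma dcr_shaped_trans_tau:
  assumes "trans \<Psi> P \<alpha> P'" and "dcr_shaped P" and "\<alpha> = LTau"
  shows "\<exists>g. g \<in># pending_gens P \<and> pending_gens P' = pending_gens P - {#g#} + {#Suc g#}
           \<and> frame_gen P' = max (frame_gen P) (Suc g) \<and> dcr_shaped P'"
  using assms
proof (induction rule: trans.induct)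
  case (Case i cs \<Psi> \<alpha> P')
  then show ?case by (auto elim!: gen_incrementing_caseE trans_PInpE)
next
  case (ComL Q \<Psi> P M N P' K Q')
  from dcr_shaped_trans_out[OF ComL(1)] ComL.prems obtain \<Phi> where out: "N = ATrm \<Phi>"
    "gen \<Phi> \<in># pending_gens P" "pending_gens P' = pending_gens P - {#gen \<Phi>#}"
    "frame_gen P' = frame_gen P" "dcr_shaped P'" by auto
  moreover from dcr_shaped_trans_in[OF ComL(2)] ComL.prems out(1) have
    "pending_gens Q' = pending_gens Q + {#Suc (gen \<Phi>)#}"
    "frame_gen Q' = max (frame_gen Q) (Suc (gen \<Phi>))" "dcr_shaped Q'" by auto
  ultimately show ?case by (intro exI[of _ "gen \<Phi>"]) (auto simp: max.assoc)
next
  case (ComR Q \<Psi> P K N P' M Q')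
  from dcr_shaped_trans_out[OF ComR(2)] ComR.prems obtain \<Phi> where out: "N = ATrm \<Phi>"
    "gen \<Phi> \<in># pending_gens Q" "pending_gens Q' = pending_gens Q - {#gen \<Phi>#}"
    "frame_gen Q' = frame_gen Q" "dcr_shaped Q'" by auto
  moreover from dcr_shaped_trans_in[OF ComR(1)] ComR.prems out(1) have
    "pending_gens P' = pending_gens P + {#Suc (gen \<Phi>)#}"
    "frame_gen P' = max (frame_gen P) (Suc (gen \<Phi>))" "dcr_shaped P'" by auto
  ultimately show ?case by (intro exI[of _ "gen \<Phi>"]) (auto simp: max.commute max.left_commute)
qed (fastforce simp: max.assoc max.left_commute)+

definition single_output_at :: "nat \<Rightarrow> 'e proc \<Rightarrow> bool" where
  "single_output_at g P \<longleftrightarrow> dcr_shaped P \<and> pending_gens P = {#g#} \<and> frame_gen P = g"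

lemma single_output_at_trans_tau:
  assumes "single_output_at g P" and "trans \<Psi> P LTau P'"
  shows "single_output_at (Suc g) P'"
  using dcr_shaped_trans_tau[OF assms(2)] assms(1) by (auto simp: single_output_at_def)

lemma dcr_shaped_big_par:
  assumes "\<And>P. P \<in> set Ps \<Longrightarrow> dcr_shaped P \<and> pending_gens P = {#} \<and> frame_gen P = 0"
  shows "dcr_shaped (big_par Ps) \<and> pending_gens (big_par Ps) = {#} \<and> frame_gen (big_par Ps) = 0"
  using assms by (induction Ps rule: big_par.induct) auto

lemma dcr_shaped_P_e: "dcr_shaped (P_e D e) \<and> pending_gens (P_e D e) = {#} \<and> frame_gen (P_e D e) = 0"
proof -
  have "\<And>X. gen (U_e D e X) = Suc (gen X)"
    by (metis U_e.simps gen.simps prod_cases4)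
  then have "gen_incrementing_case [(phi_e D e, PInp Chan ATrm
      (\<lambda>X. PPar (POut Chan (ATrm (U_e D e X)) PNil) (PAss (U_e D e X))))]"
    unfolding gen_incrementing_case_def by blast
  then show ?thesis by (simp add: P_e_def)
qed

lemma single_output_at_dcrpsi: "single_output_at 0 (dcrpsi D es)"
proof -
  have "dcr_shaped (big_par (map (P_e D) es)) \<and> pending_gens (big_par (map (P_e D) es)) = {#}
      \<and> frame_gen (big_par (map (P_e D) es)) = 0"
    by (rule dcr_shaped_big_par) (auto simp: dcr_shaped_P_e)
  then show ?thesis by (simp add: single_output_at_def dcrpsi_def P_s_def)
qed

theorem mainTheorem8:
  fixes D :: "'e dcr" and es :: "'e list" and Ps :: "'e proc list" and n :: nat
  assumes "wf_dcr D"
    and "set es = events D" and "distinct es"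
    and "length Ps = Suc n"
    and "Ps ! 0 = dcrpsi D es"
    and "\<forall>i < n. trans unit_assn (Ps ! i) LTau (Ps ! Suc i)"
  shows "gen (frame (Ps ! n)) = n"
proof -
  have "single_output_at i (Ps ! i)" if "i \<le> n" for i
    using that
  proof (induction i)
    case 0
    then show ?case using assms(5) single_output_at_dcrpsi by simp
  next
    case (Suc i)
    then have "single_output_at i (Ps ! i)" and "trans unit_assn (Ps ! i) LTau (Ps ! Suc i)"
      using assms(6) by simp_all
    then show ?case by (rule single_output_at_trans_tau)
  qed
  then show ?thesis by (simp add: single_output_at_def frame_gen_def)
qed

end
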